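(* Let $n\ge q\ge 2$ be integers and put $S_1=\sqrt{q^2+4(q-1)(n-2)}$. Let $d$ be an integer and define $j$ by $d=n-1-\frac{n-2+j}{q}$, with $j\in\left[0,\frac{S_1-q}{2}\right)$. Put $s=1-\frac{2d}{n}$, $d_0=n-\frac{j(n-1)}{q(j+q-1)}$, let $e$ be the unique rational number in $(0,1]$ with $d_0+e\in\mathbb{Z}$, and let $$f(t)=\Big(t+1+\tfrac{2e}{n}-\tfrac{2j(n-1)}{nq(j+q-1)}\Big)\Big(t+1+\tfrac{2(e-1)}{n}-\tfrac{2j(n-1)}{nq(j+q-1)}\Big)(t-s)=\sum_{i=0}^3 f_iQ_i^{(n,q)}(t).$$ Let $(\mu_d^*,\mu_{d_0+e-1}^*,\mu_{d_0+e}^* )$ be the unique solution of the linear system $$\mu_d^*\frac{K_l^{(n,q)}(d)}{r_l}+\mu_{d_0+e-1}^*\frac{K_l^{(n,q)}(d_0+e-1)}{r_l}+\mu_{d_0+e}^*\frac{K_l^{(n,q)}(d_0+e)}{r_l}=-1,\qquad l=1,2,3,$$ and for $i=4,5,\dots,n$ set $$\lambda_i^*=1+\mu_d^*\frac{K_i^{(n,q)}(d)}{r_i}+\mu_{d_0+e-1}^*\frac{K_i^{(n,q)}(d_0+e-1)}{r_i}+\mu_{d_0+e}^*\frac{K_i^{(n,q)}(d_0+e)}{r_i}.$$ If $\lambda_i^*\ge 0$ for every integer $i\in[4,n]$, then the bound $A_q(n,s)\le f(1)/f_0$ is the best bound obtainable by the linear programming method: for every real polynomial $h(t)=\sum_{i=0}^{m}h_iQ_i^{(n,q)}(t)$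 of degree $m\le n$ with $h_0>0$, $h_i\ge 0$ for all $i$, and $h(t)\le 0$ for all $t\in T_n\cap[-1,s]$, one has $h(1)/h_0\ge f(1)/f_0$.
   Context: $K_i^{(n,q)}(z)=\sum_{l=0}^{i}(-1)^l(q-1)^{i-l}\binom{z}{l}\binom{n-z}{i-l}$, $r_i=(q-1)^i\binom{n}{i}$, and $Q_i^{(n,q)}(t)=\frac{1}{r_i}K_i^{(n,q)}\!\big(\tfrac{n(1-t)}{2}\big)$. $T_n=\{-1+\frac{2i}{n}: i=0,1,\dots,n\}$. $A_q(n,s)$ is the maximum size of a code in the $q$-ary Hamming space of length $n$ with all pairwise inner products $1-\frac{2d(x,y)}{n}\le s$; the linear programming (Delsarte) bound states $A_q(n,s)\le h(1)/h_0$ for any $h$ as in the claim. *)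

theory Defs
  imports Complex_Main
begin

text \<open>Krawtchouk polynomial K_i^{(n,q)}(z), with real argument z (binomials are
  generalised binomial coefficients, so K_i is the usual polynomial in z).\<close>
definition kraw :: "nat \<Rightarrow> nat \<Rightarrow> nat \<Rightarrow> real \<Rightarrow> real" where
  "kraw n q i z = (\<Sum>l=0..i. (-1)^l * (real q - 1)^(i-l) * (z gchoose l)
                               * ((real n - z) gchoose (i-l)))"

definition rr :: "nat \<Rightarrow> nat \<Rightarrow> nat \<Rightarrow> real" where
  "rr n q i = (real q - 1)^i * real (n choose i)"

definition QQ :: "nat \<Rightarrow> nat \<Rightarrow> nat \<Rightarrow> real \<Rightarrow> real" where
  "QQ n q i t = kraw n q i (real n * (1 - t) / 2) / rr n q i"

definition Tn :: "nat \<Rightarrow> real set" where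
  "Tn n = {-1 + 2 * real i / real n | i. i \<le> n}"

definition Qcoeff :: "nat \<Rightarrow> nat \<Rightarrow> nat \<Rightarrow> (real \<Rightarrow> real) \<Rightarrow> nat \<Rightarrow> real" where
  "Qcoeff n q m f k = (THE c. \<exists>fs. fs k = c \<and> (\<forall>t. f t = (\<Sum>i\<le>m. fs i * QQ n q i t)))"

end

(*
  The weights \<mu>1, \<mu>2, \<mu>3 form a dual certificate supported at the distances
  x1 = d, x2 = d0 + e - 1, x3 = d0 + e, i.e. at the inner products t_k = 1 - 2 x_k / n.
  With \<lambda>_i = 1 + \<Sigma>_k \<mu>_k K_i(x_k) / r_i, every g = \<Sigma> g_i Q_i satisfies
  g(1) + \<Sigma>_k \<mu>_k g(t_k) = \<Sigma> g_i \<lambda>_i.  As f vanishes at the t_k and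
  \<lambda>_1 = \<lambda>_2 = \<lambda>_3 = 0, this gives f(1) / f_0 = \<lambda>_0; for an admissible h it gives
  h(1) / h_0 \<ge> \<lambda>_0 as soon as all \<mu>_k \<ge> 0.

  The equations \<lambda>_1 = \<lambda>_2 = \<lambda>_3 = 0 say that the signed measure \<delta>_0 + \<Sigma>_k \<mu>_k \<delta>_(x_k)
  has, up to the factor \<lambda>_0, the first three moments of the Hamming weight w of a uniformly
  random word.  Integrating a cubic that vanishes at three of the four points 0, x1, x2, x3
  therefore isolates \<lambda>_0 or a single \<mu>_k, with the sign of E[P(w)].  The value of d0 is
  exactly the one for which E[w (w - d) (w - y)] = (d0 - y) E[w (w - d)] for all y.
*)

theory Submission
  imports Defs
begin

lemma kraw_0 [simp]: "kraw n q 0 z = 1"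
  by (simp add: kraw_def)

lemma rr_0 [simp]: "rr n q 0 = 1"
  by (simp add: rr_def)

lemma kraw_at_0: "kraw n q i 0 = rr n q i"
proof -
  have "kraw n q i 0 = (\<Sum>l\<in>{0..i}. if l = 0 then (real q - 1)^i * (real n gchoose i) else 0)"
    unfolding kraw_def by (intro sum.cong) (auto simp: gbinomial_0_left)
  then show ?thesis
    by (simp add: rr_def binomial_gbinomial)
qed

lemma rr_pos: "2 \<le> q \<Longrightarrow> i \<le> n \<Longrightarrow> 0 < rr n q i"
  unfolding rr_def by simp

lemma QQ_1: "2 \<le> q \<Longrightarrow> i \<le> n \<Longrightarrow> QQ n q i 1 = 1"
  using rr_pos[of q i n] by (simp add: QQ_def kraw_at_0)

lemma kraw_1: "kraw n q 1 z = - real q * z + (real q - 1) * real n"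
  by (simp add: kraw_def algebra_simps)

lemma kraw_2: "kraw n q 2 z = (real q)^2 / 2 * z^2
    + ((real q^2 - 2 * real q) / 2 + real n * real q - real n * real q^2) * z
    + (real q - 1)^2 * real n * (real n - 1) / 2"
  by (simp add: kraw_def numeral_eq_Suc gbinomial_Suc atLeast0_atMost_Suc gbinomial_prod_rev)
     (simp add: field_simps power2_eq_square)

lemma kraw_3: "kraw n q 3 z = - (real q^3 / 6) * z^3
    + (real q^2 - real q^3 / 2 + real n * (real q^3 - real q^2) / 2) * z^2
    + (- real q + real q^2 - real q^3 / 3 + real n * (3 * real q / 2 - 5 * real q^2 / 2 + real q^3)
       + real n^2 * (- real q / 2 + real q^2 - real q^3 / 2)) * z
    + (real q - 1)^3 * real n * (real n - 1) * (real n - 2) / 6"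
  by (simp add: kraw_def numeral_eq_Suc gbinomial_Suc atLeast0_atMost_Suc gbinomial_prod_rev)
     (simp add: field_simps power2_eq_square power3_eq_cube)

definition inner_of_dist :: "nat \<Rightarrow> real \<Rightarrow> real" where
  "inner_of_dist n z = 1 - 2 * z / real n"

lemma QQ_inner_of_dist:
  "0 < n \<Longrightarrow> QQ n q i (inner_of_dist n z) = kraw n q i z / rr n q i"
  by (simp add: QQ_def inner_of_dist_def)

lemma inner_of_dist_in_Tn:
  assumes "0 < n" "z \<in> \<int>" "0 \<le> z" "z \<le> real n"
  shows "inner_of_dist n z \<in> Tn n"
proof -
  from assms(2,3) obtain k :: nat where k: "z = real k"
    by (metis Ints_cases nonneg_int_cases of_int_0_le_iff of_int_of_nat_eq)
  with assms have "n - k \<le> n" "inner_of_dist n z = -1 + 2 * real (n - k) / real n"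
    by (auto simp: inner_of_dist_def of_nat_diff field_simps)
  then show ?thesis
    unfolding Tn_def by blast
qed

lemma inner_of_dist_ge_minus_1: "0 < n \<Longrightarrow> z \<le> real n \<Longrightarrow> -1 \<le> inner_of_dist n z"
  by (simp add: inner_of_dist_def field_simps)

lemma inner_of_dist_le_iff: "0 < n \<Longrightarrow> inner_of_dist n y \<le> inner_of_dist n z \<longleftrightarrow> z \<le> y"
  by (simp add: inner_of_dist_def field_simps)

definition dual_lambda :: "nat \<Rightarrow> nat \<Rightarrow> 'k set \<Rightarrow> ('k \<Rightarrow> real) \<Rightarrow> ('k \<Rightarrow> real) \<Rightarrow> nat \<Rightarrow> real" where
  "dual_lambda n q K \<mu> x i = 1 + (\<Sum>k\<in>K. \<mu> k * kraw n q i (x k) / rr n q i)"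

lemma dual_lambda_0: "dual_lambda n q K \<mu> x 0 = 1 + sum \<mu> K"
  by (simp add: dual_lambda_def)

lemma QQ_sum_dual_identity:
  assumes "2 \<le> q" "m \<le> n" "0 < n"
  shows "(\<Sum>i\<le>m. g i * QQ n q i 1)
      + (\<Sum>k\<in>K. \<mu> k * (\<Sum>i\<le>m. g i * QQ n q i (inner_of_dist n (x k))))
    = (\<Sum>i\<le>m. g i * dual_lambda n q K \<mu> x i)"
proof -
  have "(\<Sum>i\<le>m. g i * dual_lambda n q K \<mu> x i)
      = (\<Sum>i\<le>m. g i * QQ n q i 1 + (\<Sum>k\<in>K. \<mu> k * (g i * QQ n q i (inner_of_dist n (x k)))))"
    using assms by (intro sum.cong)
      (auto simp: dual_lambda_def QQ_1 QQ_inner_of_dist sum_distrib_left algebra_simps)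
  then show ?thesis
    by (simp add: sum.distrib sum_distrib_left sum.swap[of _ K])
qed

lemma Qcoeff_0_eq_dual:
  assumes "2 \<le> q" "m \<le> n" "0 < n"
    and expansion: "\<forall>t. f t = (\<Sum>i\<le>m. fs i * QQ n q i t)"
    and roots: "\<forall>k\<in>K. f (inner_of_dist n (x k)) = 0"
    and lambda_vanish: "\<forall>i\<in>{1..m}. dual_lambda n q K \<mu> x i = 0"
    and lambda_0: "dual_lambda n q K \<mu> x 0 \<noteq> 0"
  shows "Qcoeff n q m f 0 = f 1 / dual_lambda n q K \<mu> x 0"
proof -
  have coeff_0: "gs 0 = f 1 / dual_lambda n q K \<mu> x 0"
    if gs: "\<forall>t. f t = (\<Sum>i\<le>m. gs i * QQ n q i t)" for gs
  proof -
    have "f 1 = (\<Sum>i\<le>m. gs i * dual_lambda n q K \<mu> x i)"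
      using QQ_sum_dual_identity[OF assms(1-3), of gs \<mu> x K] gs roots by simp
    also have "\<dots> = (\<Sum>i\<le>m. if i = 0 then gs 0 * dual_lambda n q K \<mu> x 0 else 0)"
      using lambda_vanish by (intro sum.cong) auto
    finally show ?thesis
      using lambda_0 by simp
  qed
  show ?thesis
    unfolding Qcoeff_def
    by (rule the_equality) (use expansion coeff_0 in blast)+
qed

lemma lp_dual_bound:
  assumes "2 \<le> q" "m \<le> n" "0 < n"
    and h_0: "0 < h 0" and h_nonneg: "\<forall>i\<le>m. 0 \<le> h i"
    and h_nonpos: "\<forall>t\<in>Tn n. -1 \<le> t \<and> t \<le> s \<longrightarrow> (\<Sum>i\<le>m. h i * QQ n q i t) \<le> 0"
    and \<mu>_nonneg: "\<forall>k\<in>K. 0 \<le> \<mu> k"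
    and nodes: "\<forall>k\<in>K. \<mu> k \<noteq> 0 \<longrightarrow>
       x k \<in> \<int> \<and> 0 \<le> x k \<and> x k \<le> real n \<and> inner_of_dist n (x k) \<le> s"
    and lambda_nonneg: "\<forall>i\<in>{1..n}. 0 \<le> dual_lambda n q K \<mu> x i"
  shows "dual_lambda n q K \<mu> x 0 \<le> (\<Sum>i\<le>m. h i * QQ n q i 1) / h 0"
proof -
  have "\<mu> k * (\<Sum>i\<le>m. h i * QQ n q i (inner_of_dist n (x k))) \<le> 0" if "k \<in> K" for k
  proof (cases "\<mu> k = 0")
    case False
    with that nodes assms(3) have "(\<Sum>i\<le>m. h i * QQ n q i (inner_of_dist n (x k))) \<le> 0"
      by (intro h_nonpos[rule_format] conjI inner_of_dist_in_Tn inner_of_dist_ge_minus_1) auto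
    with that \<mu>_nonneg show ?thesis
      by (simp add: mult_nonneg_nonpos)
  qed simp
  then have "(\<Sum>k\<in>K. \<mu> k * (\<Sum>i\<le>m. h i * QQ n q i (inner_of_dist n (x k)))) \<le> 0"
    by (rule sum_nonpos)
  moreover have "(\<Sum>i\<le>m. if i = 0 then h 0 * dual_lambda n q K \<mu> x 0 else 0)
      \<le> (\<Sum>i\<le>m. h i * dual_lambda n q K \<mu> x i)"
    using h_nonneg lambda_nonneg assms(2) by (intro sum_mono) auto
  ultimately have "h 0 * dual_lambda n q K \<mu> x 0 \<le> (\<Sum>i\<le>m. h i * QQ n q i 1)"
    using QQ_sum_dual_identity[OF assms(1-3), of h \<mu> x K] by simp
  with h_0 show ?thesis
    by (simp add: le_divide_eq mult.commute)
qed

lemma cubic_in_triangular_span: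
  fixes k1 k2 k3 :: "real \<Rightarrow> real"
  assumes k1: "\<And>z. k1 z = a1 * z + b10"
    and k2: "\<And>z. k2 z = a2 * z^2 + b21 * z + b20"
    and k3: "\<And>z. k3 z = a3 * z^3 + b32 * z^2 + b31 * z + b30"
    and "a1 \<noteq> 0" "a2 \<noteq> 0" "a3 \<noteq> 0"
  shows "\<exists>c0 c1 c2 c3. \<forall>z. g3 * z^3 + g2 * z^2 + g1 * z + g0
           = c0 + c1 * k1 z + c2 * k2 z + c3 * k3 z"
proof -
  define c3 where "c3 = g3 / a3"
  define c2 where "c2 = (g2 - c3 * b32) / a2"
  define c1 where "c1 = (g1 - c3 * b31 - c2 * b21) / a1"
  define c0 where "c0 = g0 - c3 * b30 - c2 * b20 - c1 * b10"
  have "g3 * z^3 + g2 * z^2 + g1 * z + g0 = c0 + c1 * k1 z + c2 * k2 z + c3 * k3 z" for z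
  proof -
    have "c0 + c1 * k1 z + c2 * k2 z + c3 * k3 z
        = (c3 * a3) * z^3 + (c2 * a2 + c3 * b32) * z^2 + (c1 * a1 + c2 * b21 + c3 * b31) * z
          + (c0 + c1 * b10 + c2 * b20 + c3 * b30)"
      unfolding k1 k2 k3 by (simp add: algebra_simps)
    also have "\<dots> = g3 * z^3 + g2 * z^2 + g1 * z + g0"
      using assms(4-6) by (simp add: c0_def c1_def c2_def c3_def)
    finally show ?thesis ..
  qed
  then show ?thesis by blast
qed

lemma cubic_in_kraw_span:
  assumes "0 < q"
  shows "\<exists>c. \<forall>z. g3 * z^3 + g2 * z^2 + g1 * z + g0 = (\<Sum>i\<le>3. c i * kraw n q i z)"
proof -
  obtain c0 c1 c2 c3 where c: "\<forall>z. g3 * z^3 + g2 * z^2 + g1 * z + g0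
      = c0 + c1 * kraw n q 1 z + c2 * kraw n q 2 z + c3 * kraw n q 3 z"
    using cubic_in_triangular_span[OF kraw_1 kraw_2 kraw_3] assms by fastforce
  define c where "c i = (if i = 0 then c0 else if i = 1 then c1 else if i = 2 then c2 else c3)"
    for i :: nat
  have "(\<Sum>i\<le>3. c i * kraw n q i z) = c0 + c1 * kraw n q 1 z + c2 * kraw n q 2 z + c3 * kraw n q 3 z"
    for z by (simp add: c_def numeral_3_eq_3 numeral_2_eq_2 atMost_Suc)
  with c show ?thesis by (intro exI[of _ c]) simp
qed

lemma cubic_in_QQ_span:
  assumes "2 \<le> q" "3 \<le> n"
  shows "\<exists>fs. \<forall>t. g3 * t^3 + g2 * t^2 + g1 * t + g0 = (\<Sum>i\<le>3. fs i * QQ n q i t)"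
proof -
  define \<alpha> where "\<alpha> = - 2 / real n"
  obtain c where c: "\<forall>z. (g3 * \<alpha>^3) * z^3 + ((3 * g3 + g2) * \<alpha>^2) * z^2
      + ((3 * g3 + 2 * g2 + g1) * \<alpha>) * z + (g3 + g2 + g1 + g0) = (\<Sum>i\<le>3. c i * kraw n q i z)"
    using cubic_in_kraw_span[of q] assms(1) by fastforce
  have "g3 * t^3 + g2 * t^2 + g1 * t + g0 = (\<Sum>i\<le>3. (c i * rr n q i) * QQ n q i t)" for t
  proof -
    define z where "z = real n * (1 - t) / 2"
    have t: "t = 1 + \<alpha> * z"
      using assms(2) by (simp add: z_def \<alpha>_def field_simps)
    have "g3 * t^3 + g2 * t^2 + g1 * t + g0 = (g3 * \<alpha>^3) * z^3 + ((3 * g3 + g2) * \<alpha>^2) * z^2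
        + ((3 * g3 + 2 * g2 + g1) * \<alpha>) * z + (g3 + g2 + g1 + g0)"
      unfolding t by (simp add: algebra_simps power2_eq_square power3_eq_cube)
    also have "\<dots> = (\<Sum>i\<le>3. c i * kraw n q i z)"
      using c by simp
    also have "\<dots> = (\<Sum>i\<le>3. (c i * rr n q i) * QQ n q i t)"
      using assms rr_pos[of q _ n] by (intro sum.cong) (auto simp: QQ_def z_def less_imp_neq[symmetric])
    finally show ?thesis .
  qed
  then show ?thesis
    by (intro exI[of _ "\<lambda>i. c i * rr n q i"]) simp
qed

(* Moments of the Hamming weight w of a uniformly random word in F_q^n;
   cubic_expect n q r1 r2 r3 is the expectation of (w - r1) (w - r2) (w - r3). *)
definition mom1 :: "nat \<Rightarrow> nat \<Rightarrow> real" where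
  "mom1 n q = real n * (real q - 1) / real q"

definition mom2 :: "nat \<Rightarrow> nat \<Rightarrow> real" where
  "mom2 n q = mom1 n q * (1 + (real n - 1) * (real q - 1) / real q)"

definition mom3 :: "nat \<Rightarrow> nat \<Rightarrow> real" where
  "mom3 n q = mom1 n q * (1 + 3 * (real n - 1) * (real q - 1) / real q
                             + (real n - 1) * (real n - 2) * ((real q - 1) / real q)^2)"

definition cubic_expect :: "nat \<Rightarrow> nat \<Rightarrow> real \<Rightarrow> real \<Rightarrow> real \<Rightarrow> real" where
  "cubic_expect n q r1 r2 r3 = mom3 n q - (r1 + r2 + r3) * mom2 n q
     + (r1 * r2 + r2 * r3 + r3 * r1) * mom1 n q - r1 * r2 * r3"

lemma kraw_sum_of_dual_lambda:
  assumes "2 \<le> q" "l \<le> n" "dual_lambda n q K \<mu> x l = 0"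
  shows "kraw n q l 0 + (\<Sum>k\<in>K. \<mu> k * kraw n q l (x k)) = 0"
proof -
  have "rr n q l \<noteq> 0"
    using rr_pos[OF assms(1,2)] by simp
  with assms(3) show ?thesis
    by (simp add: dual_lambda_def kraw_at_0 field_simps flip: sum_divide_distrib)
qed

lemma sum_mult_cubic:
  fixes \<mu> x :: "'k \<Rightarrow> real"
  shows "(\<Sum>k\<in>K. \<mu> k * (a3 * x k^3 + a2 * x k^2 + a1 * x k + a0))
    = a3 * (\<Sum>k\<in>K. \<mu> k * x k^3) + a2 * (\<Sum>k\<in>K. \<mu> k * x k^2)
      + a1 * (\<Sum>k\<in>K. \<mu> k * x k) + a0 * sum \<mu> K"
proof -
  have "(\<Sum>k\<in>K. \<mu> k * (a3 * x k^3 + a2 * x k^2 + a1 * x k + a0))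
      = (\<Sum>k\<in>K. a3 * (\<mu> k * x k^3) + a2 * (\<mu> k * x k^2) + a1 * (\<mu> k * x k) + a0 * \<mu> k)"
    by (intro sum.cong) (simp_all add: algebra_simps)
  then show ?thesis
    by (simp add: sum.distrib sum_distrib_left)
qed

lemma dual_moment_1:
  assumes "2 \<le> q" "1 \<le> n" "dual_lambda n q K \<mu> x 1 = 0"
  shows "(\<Sum>k\<in>K. \<mu> k * x k) = mom1 n q * dual_lambda n q K \<mu> x 0"
proof -
  have kraw_cubic: "kraw n q 1 z = 0 * z^3 + 0 * z^2 + (- real q) * z + (real q - 1) * real n" for z
    unfolding kraw_1 by simp
  have "(real q - 1) * real n * dual_lambda n q K \<mu> x 0 - real q * (\<Sum>k\<in>K. \<mu> k * x k) = 0"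
    using kraw_sum_of_dual_lambda[OF assms, unfolded kraw_cubic sum_mult_cubic]
    by (simp add: dual_lambda_0 algebra_simps)
  with assms(1) show ?thesis
    by (simp add: mom1_def field_simps)
qed

lemma dual_moment_2:
  assumes "2 \<le> q" "2 \<le> n" "dual_lambda n q K \<mu> x 1 = 0" "dual_lambda n q K \<mu> x 2 = 0"
  shows "(\<Sum>k\<in>K. \<mu> k * x k^2) = mom2 n q * dual_lambda n q K \<mu> x 0"
proof -
  define A B C where "A = (real q)^2 / 2"
    and "B = (real q^2 - 2 * real q) / 2 + real n * real q - real n * real q^2"
    and "C = (real q - 1)^2 * real n * (real n - 1) / 2"
  have kraw_cubic: "kraw n q 2 z = 0 * z^3 + A * z^2 + B * z + C" for z
    unfolding kraw_2 A_def B_def C_def by simp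
  have eq: "A * (\<Sum>k\<in>K. \<mu> k * x k^2) + (B * mom1 n q + C) * dual_lambda n q K \<mu> x 0 = 0"
    using kraw_sum_of_dual_lambda[OF assms(1,2,4), unfolded kraw_cubic sum_mult_cubic]
      dual_moment_1[OF assms(1) _ assms(3)] assms(2)
    by (simp add: dual_lambda_0 algebra_simps)
  have mean: "B * mom1 n q + C = - (A * mom2 n q)"
    using assms(1) by (simp add: A_def B_def C_def mom1_def mom2_def field_simps power2_eq_square)
  have "A \<noteq> 0"
    using assms(1) by (simp add: A_def)
  with eq show ?thesis
    unfolding mean by (simp add: algebra_simps)
qed

lemma dual_moment_3:
  assumes "2 \<le> q" "3 \<le> n" and vanish: "\<forall>l\<in>{1,2,3}. dual_lambda n q K \<mu> x l = 0"
  shows "(\<Sum>k\<in>K. \<mu> k * x k^3) = mom3 n q * dual_lambda n q K \<mu> x 0"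
proof -
  define A B C D where "A = - (real q^3 / 6)"
    and "B = real q^2 - real q^3 / 2 + real n * (real q^3 - real q^2) / 2"
    and "C = - real q + real q^2 - real q^3 / 3 + real n * (3 * real q / 2 - 5 * real q^2 / 2 + real q^3)
       + real n^2 * (- real q / 2 + real q^2 - real q^3 / 2)"
    and "D = (real q - 1)^3 * real n * (real n - 1) * (real n - 2) / 6"
  have kraw_cubic: "kraw n q 3 z = A * z^3 + B * z^2 + C * z + D" for z
    unfolding kraw_3 A_def B_def C_def D_def by simp
  have "dual_lambda n q K \<mu> x 1 = 0" "dual_lambda n q K \<mu> x 2 = 0" "dual_lambda n q K \<mu> x 3 = 0"
    using vanish by simp_all
  note moments = dual_moment_1[OF assms(1) _ this(1)] dual_moment_2[OF assms(1) _ this(1,2)]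
  have eq: "A * (\<Sum>k\<in>K. \<mu> k * x k^3) + (B * mom2 n q + C * mom1 n q + D) * dual_lambda n q K \<mu> x 0 = 0"
    using kraw_sum_of_dual_lambda[OF assms(1,2) \<open>dual_lambda n q K \<mu> x 3 = 0\<close>,
        unfolded kraw_cubic sum_mult_cubic] moments assms(2)
    by (simp add: dual_lambda_0 algebra_simps)
  have mean: "B * mom2 n q + C * mom1 n q + D = - (A * mom3 n q)"
    using assms(1) by (simp add: A_def B_def C_def D_def mom1_def mom2_def mom3_def
        field_simps power2_eq_square power3_eq_cube)
  have "A \<noteq> 0"
    using assms(1) by (simp add: A_def)
  with eq show ?thesis
    unfolding mean by (simp add: algebra_simps)
qed

lemma cubic_identity_of_dual_lambda:
  assumes "2 \<le> q" "3 \<le> n" "\<forall>l\<in>{1,2,3}. dual_lambda n q K \<mu> x l = 0"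
  shows "- (r1 * r2 * r3) + (\<Sum>k\<in>K. \<mu> k * ((x k - r1) * (x k - r2) * (x k - r3)))
    = dual_lambda n q K \<mu> x 0 * cubic_expect n q r1 r2 r3"
proof -
  have n: "1 \<le> n" "2 \<le> n"
    using assms(2) by simp_all
  have vanish: "dual_lambda n q K \<mu> x 1 = 0" "dual_lambda n q K \<mu> x 2 = 0"
    using assms(3) by simp_all
  note moments = dual_moment_1[OF assms(1) n(1) vanish(1)] dual_moment_2[OF assms(1) n(2) vanish]
    dual_moment_3[OF assms]
  have "(\<Sum>k\<in>K. \<mu> k * ((x k - r1) * (x k - r2) * (x k - r3)))
      = (\<Sum>k\<in>K. \<mu> k * (1 * x k^3 + (- (r1 + r2 + r3)) * x k^2
                          + (r1 * r2 + r2 * r3 + r3 * r1) * x k + (- (r1 * r2 * r3))))"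
    by (intro sum.cong) (simp_all add: algebra_simps power2_eq_square power3_eq_cube)
  also have "\<dots> = dual_lambda n q K \<mu> x 0 * cubic_expect n q r1 r2 r3 + r1 * r2 * r3"
    unfolding sum_mult_cubic moments by (simp add: cubic_expect_def dual_lambda_0 algebra_simps)
  finally show ?thesis by simp
qed

definition d_param :: "nat \<Rightarrow> nat \<Rightarrow> real \<Rightarrow> real" where
  "d_param n q j = real n - 1 - (real n - 2 + j) / real q"

definition d0_param :: "nat \<Rightarrow> nat \<Rightarrow> real \<Rightarrow> real" where
  "d0_param n q j = real n - j * (real n - 1) / (real q * (j + real q - 1))"

lemma mom1_minus_d_param:
  "2 \<le> q \<Longrightarrow> mom1 n q - d_param n q j = (j + real q - 2) / real q"
  by (simp add: mom1_def d_param_def field_simps)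

lemma mom2_minus_d_param:
  "2 \<le> q \<Longrightarrow> mom2 n q - d_param n q j * mom1 n q = mom1 n q * (j + real q - 1) / real q"
  by (simp add: mom1_def mom2_def d_param_def field_simps)

lemma mom3_minus_d_param:
  assumes "2 \<le> q" "0 \<le> j"
  shows "mom3 n q - d_param n q j * mom2 n q
    = d0_param n q j * (mom2 n q - d_param n q j * mom1 n q)"
proof -
  define N Q where "N = real n" and "Q = real q"
  define D where "D = j + Q - 1"
  define M1 M2 M3 C X where "M1 = N * (Q - 1)" and "M2 = N * (Q - 1) * (Q + (N - 1) * (Q - 1))"
    and "M3 = N * (Q - 1) * (Q^2 + 3 * (N - 1) * (Q - 1) * Q + (N - 1) * (N - 2) * (Q - 1)^2)"
    and "C = (N - 1) * Q - (N - 2 + j)" and "X = N * Q * D - j * (N - 1)"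
  have Q: "Q \<noteq> 0" and D: "D \<noteq> 0"
    using assms by (auto simp: Q_def D_def)
  have moms: "mom1 n q = M1 / Q" "mom2 n q = M2 / Q^2" "mom3 n q = M3 / Q^3"
    using Q by (simp_all add: mom1_def mom2_def mom3_def M1_def M2_def M3_def N_def Q_def
        field_simps power2_eq_square power3_eq_cube)
  have params: "d_param n q j = C / Q" "d0_param n q j = X / (Q * D)"
    unfolding d_param_def d0_param_def C_def X_def D_def[symmetric] N_def[symmetric] Q_def[symmetric]
    using Q D by (simp_all add: field_simps)
  have key: "(M3 - C * M2) * D = X * (M2 - C * M1)"
    unfolding M1_def M2_def M3_def C_def X_def D_def by algebra
  have "mom3 n q - d_param n q j * mom2 n q = (M3 - C * M2) * D / (Q^3 * D)"
    unfolding moms params using Q D by (simp add: field_simps power2_eq_square power3_eq_cube)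
  also have "\<dots> = X * (M2 - C * M1) / (Q^3 * D)"
    by (simp only: key)
  also have "\<dots> = d0_param n q j * (mom2 n q - d_param n q j * mom1 n q)"
    unfolding moms params using Q D by (simp add: field_simps power2_eq_square power3_eq_cube)
  finally show ?thesis .
qed

lemma d0_param_gap:
  assumes "2 \<le> q" "0 \<le> j"
  shows "(mom2 n q - d_param n q j * mom1 n q) - d0_param n q j * (mom1 n q - d_param n q j)
    = (real n * (real q - 1) - j * (j + real q - 2)) / (real q^2 * (j + real q - 1))"
proof -
  define N Q where "N = real n" and "Q = real q"
  define D where "D = j + Q - 1"
  have Q: "Q \<noteq> 0" and D: "D \<noteq> 0"
    using assms by (auto simp: Q_def D_def)
  have V: "mom2 n q - d_param n q j * mom1 n q = N * (Q - 1) * D / Q^2"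
    unfolding mom2_minus_d_param[OF assms(1)]
    unfolding mom1_def N_def[symmetric] Q_def[symmetric] D_def[symmetric]
    by (simp add: power2_eq_square)
  have V1: "mom1 n q - d_param n q j = (D - 1) / Q"
    unfolding mom1_minus_d_param[OF assms(1)] by (simp add: D_def Q_def)
  have d0: "d0_param n q j = (N * Q * D - j * (N - 1)) / (Q * D)"
    unfolding d0_param_def N_def[symmetric] Q_def[symmetric] D_def[symmetric]
    using Q D by (simp add: field_simps)
  show ?thesis
    unfolding V V1 d0 N_def[symmetric] Q_def[symmetric] D_def[symmetric]
    using Q D by (simp add: field_simps power2_eq_square) (simp add: D_def algebra_simps)
qed

lemma d0_param_minus_d_param:
  assumes "2 \<le> q" "0 \<le> j"
  shows "d0_param n q j - 1 - d_param n q j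
    = ((real n - 2) * (real q - 1) + j * (j + real q - 2)) / (real q * (j + real q - 1))"
proof -
  define Q where "Q = real q"
  define D where "D = j + Q - 1"
  have "Q \<noteq> 0" "D \<noteq> 0"
    using assms by (auto simp: Q_def D_def)
  then show ?thesis
    unfolding d_param_def d0_param_def Q_def[symmetric] D_def[symmetric]
    by (simp add: field_simps) (simp add: D_def algebra_simps)
qed

lemma d_param_bounds:
  assumes "2 \<le> q" "0 \<le> j" "j * (j + real q) < (real q - 1) * (real n - 2)"
  shows "3 \<le> n" and "0 < d_param n q j" and "d_param n q j + 1 \<le> d0_param n q j"
    and "d0_param n q j \<le> real n"
proof -
  have q: "2 \<le> real q"
    using assms(1) by simp
  have "0 \<le> j * (j + real q)"
    using assms(2) q by simp
  with assms(3) q have n: "2 < real n"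
    by (smt (verit) mult_nonneg_nonpos)
  then show "3 \<le> n"
    by simp
  have "j < real n"
  proof (rule ccontr)
    assume "\<not> j < real n"
    then have "real n * real q \<le> j * (j + real q)"
      using assms(2) q n by (intro mult_mono) auto
    moreover have "(real q - 1) * (real n - 2) < real n * real q"
      using q n by (simp add: algebra_simps)
    ultimately show False
      using assms(3) by linarith
  qed
  moreover have "(real n - 1) * 2 \<le> (real n - 1) * real q"
    using q n by (intro mult_left_mono) auto
  ultimately have "0 < ((real n - 1) * real q - (real n - 2 + j)) / real q"
    using q by simp
  then show "0 < d_param n q j"
    using q by (simp add: d_param_def field_simps)
  have "0 \<le> ((real n - 2) * (real q - 1) + j * (j + real q - 2)) / (real q * (j + real q - 1))"
    using q n assms(2) by simp
  then show "d_param n q j + 1 \<le> d0_param n q j"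
    using d0_param_minus_d_param[OF assms(1,2), of n] by linarith
  have "0 \<le> j * (real n - 1) / (real q * (j + real q - 1))"
    using q n assms(2) by simp
  then show "d0_param n q j \<le> real n"
    by (simp add: d0_param_def)
qed

lemma cubic_expect_0_Suc_nonneg:
  assumes "2 \<le> q" "q \<le> n"
  shows "0 \<le> cubic_expect n q 0 a (a + 1)"
proof -
  have q: "2 \<le> real q" and n: "real q \<le> real n"
    using assms by simp_all
  have "cubic_expect n q 0 a (a + 1)
      = mom1 n q * ((a - (real n - 1) * (real q - 1) / real q - 1 / 2)^2
          + (4 * (real n - 1) * (real q - 1) - (real q)^2) / (4 * (real q)^2))"
    using q by (simp add: cubic_expect_def mom1_def mom2_def mom3_def field_simps power2_eq_square)
  moreover have "4 * (real q - 1) * (real q - 1) - (real q)^2 = (3 * real q - 2) * (real q - 2)"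
    by (simp add: algebra_simps power2_eq_square)
  then have "(real q)^2 \<le> 4 * (real q - 1) * (real q - 1)"
    using q by (smt (verit) mult_nonneg_nonneg)
  then have "(real q)^2 \<le> 4 * (real n - 1) * (real q - 1)"
    using q n by (smt (verit) mult_right_mono)
  moreover have "0 \<le> mom1 n q"
    using q by (simp add: mom1_def)
  ultimately show ?thesis
    by simp
qed

lemma cubic_expect_0_d_param:
  assumes "2 \<le> q" "0 \<le> j"
  shows "cubic_expect n q 0 (d_param n q j) y
    = (d0_param n q j - y) * (mom2 n q - d_param n q j * mom1 n q)"
proof -
  have "cubic_expect n q 0 (d_param n q j) y
      = (mom3 n q - d_param n q j * mom2 n q) - y * (mom2 n q - d_param n q j * mom1 n q)"
    by (simp add: cubic_expect_def algebra_simps)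
  then show ?thesis
    unfolding mom3_minus_d_param[OF assms] by (simp add: algebra_simps)
qed

lemma cubic_expect_d_param_neg:
  assumes "2 \<le> q" "0 \<le> j" "j * (j + real q) < (real q - 1) * (real n - 2)"
    and "d0_param n q j - 1 \<le> a" "a \<le> d0_param n q j"
  shows "cubic_expect n q (d_param n q j) a (a + 1) < 0"
proof -
  define d d0 V V1 where "d = d_param n q j" and "d0 = d0_param n q j"
    and "V = mom2 n q - d * mom1 n q" and "V1 = mom1 n q - d"
  have q: "2 \<le> real q"
    using assms(1) by simp
  have "0 \<le> V1"
    using q assms(2) by (simp add: V1_def d_def mom1_minus_d_param[OF assms(1)])
  have "j * (j + real q - 2) \<le> j * (j + real q)" "(real q - 1) * (real n - 2) \<le> real n * (real q - 1)"
    using assms(2) q by (simp_all add: algebra_simps)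
  then have "j * (j + real q - 2) < real n * (real q - 1)"
    using assms(3) by linarith
  moreover have "0 < (real q)^2 * (j + real q - 1)"
    using q assms(2) by simp
  ultimately have "0 < V - d0 * V1"
    unfolding d0_param_gap[OF assms(1,2), of n] V_def V1_def d_def d0_def by simp
  then have "d0 * V1 < V"
    by simp
  have "1 < d0"
    using d_param_bounds[OF assms(1-3)] by (simp add: d_def d0_def)
  have E: "cubic_expect n q d a (a + 1) = (d0 - 2 * a - 1) * V + a * (a + 1) * V1"
    using mom3_minus_d_param[OF assms(1,2), of n]
    by (simp add: cubic_expect_def d_def d0_def V_def V1_def algebra_simps)
  have "d0 - 2 * a - 1 < 0"
    using assms(4) \<open>1 < d0\<close> by (simp add: d0_def)
  then have "(d0 - 2 * a - 1) * V < (d0 - 2 * a - 1) * (d0 * V1)"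
    using \<open>d0 * V1 < V\<close> by (simp add: mult_less_cancel_left_neg)
  also have "(d0 - 2 * a - 1) * (d0 * V1) + a * (a + 1) * V1 = - ((d0 - a) * (1 - (d0 - a)) * V1)"
    by (simp add: algebra_simps)
  moreover have "0 \<le> (d0 - a) * (1 - (d0 - a)) * V1"
    using assms(4,5) \<open>0 \<le> V1\<close> by (simp add: d0_def)
  ultimately show ?thesis
    unfolding E d_def[symmetric] by linarith
qed

lemma three_node_lambda_0_pos:
  fixes \<mu>1 \<mu>2 \<mu>3 e S :: real
  assumes "2 \<le> q" "q \<le> n" "0 \<le> j" "j * (j + real q) < (real q - 1) * (real n - 2)"
    and "0 < e" "e \<le> 1"
  defines "c \<equiv> d_param n q j" and "a \<equiv> d0_param n q j + e - 1" and "b \<equiv> d0_param n q j + e"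
  assumes interp: "\<And>r1 r2 r3. - (r1 * r2 * r3) + \<mu>1 * ((c - r1) * (c - r2) * (c - r3))
      + \<mu>2 * ((a - r1) * (a - r2) * (a - r3)) + \<mu>3 * ((b - r1) * (b - r2) * (b - r3))
      = S * cubic_expect n q r1 r2 r3"
  shows "0 < S"
proof -
  note bounds = d_param_bounds[OF assms(1,3,4)]
  have "0 < c" "c < a"
    using bounds assms(5) by (simp_all add: c_def a_def)
  then have "0 < c * a * b"
    by (simp add: a_def b_def)
  moreover have "- (c * a * b) = S * cubic_expect n q c a (a + 1)"
    using interp[of c a b] by (simp add: a_def b_def)
  ultimately have "S * cubic_expect n q c a (a + 1) < 0"
    by linarith
  moreover have "cubic_expect n q c a (a + 1) < 0"
    using assms(1,3,4,5,6) unfolding c_def a_def by (intro cubic_expect_d_param_neg) auto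
  ultimately show "0 < S"
    by (simp add: mult_less_0_iff)
qed

lemma three_node_dual_weights:
  fixes \<mu>1 \<mu>2 \<mu>3 e S :: real
  assumes "2 \<le> q" "q \<le> n" "0 \<le> j" "j * (j + real q) < (real q - 1) * (real n - 2)"
    and "0 < e" "e \<le> 1"
  defines "c \<equiv> d_param n q j" and "a \<equiv> d0_param n q j + e - 1" and "b \<equiv> d0_param n q j + e"
  assumes interp: "\<And>r1 r2 r3. - (r1 * r2 * r3) + \<mu>1 * ((c - r1) * (c - r2) * (c - r3))
      + \<mu>2 * ((a - r1) * (a - r2) * (a - r3)) + \<mu>3 * ((b - r1) * (b - r2) * (b - r3))
      = S * cubic_expect n q r1 r2 r3"
  shows "0 \<le> \<mu>1" and "0 \<le> \<mu>2" and "0 \<le> \<mu>3" and "e = 1 \<Longrightarrow> \<mu>3 = 0"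
proof -
  note bounds = d_param_bounds[OF assms(1,3,4)]
  have S: "0 < S"
    using three_node_lambda_0_pos[OF assms(1-6) interp[unfolded c_def a_def b_def]] .
  have b: "b = a + 1"
    by (simp add: a_def b_def)
  have "0 < c" "c < a"
    using bounds assms(5) by (simp_all add: c_def a_def)
  have "0 < mom1 n q"
    using assms(1) bounds(1) by (simp add: mom1_def)
  then have V: "0 < mom2 n q - c * mom1 n q"
    using assms(1,3) by (simp add: c_def mom2_minus_d_param)
  have "\<mu>1 * (c * ((c - a) * (c - b))) = S * cubic_expect n q 0 a (a + 1)"
    using interp[of 0 a b] by (simp add: b mult.assoc)
  moreover have "0 \<le> S * cubic_expect n q 0 a (a + 1)"
    using S cubic_expect_0_Suc_nonneg[OF assms(1,2)] by simp
  moreover have "0 < c * ((c - a) * (c - b))"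
    using \<open>0 < c\<close> \<open>c < a\<close> by (intro mult_pos_pos mult_neg_neg) (simp_all add: b)
  ultimately show "0 \<le> \<mu>1"
    by (metis zero_le_mult_iff not_le)
  have "\<mu>2 * (a * (a - c) * (a - b)) = S * cubic_expect n q 0 c b"
    using interp[of 0 c b] by simp
  also have "\<dots> = - (S * e * (mom2 n q - c * mom1 n q))"
    unfolding c_def cubic_expect_0_d_param[OF assms(1,3)] by (simp add: b_def)
  finally have "\<mu>2 * (a * (a - c)) = S * e * (mom2 n q - c * mom1 n q)"
    by (simp add: b)
  moreover have "0 \<le> S * e * (mom2 n q - c * mom1 n q)" "0 < a * (a - c)"
    using S assms(5) V \<open>0 < c\<close> \<open>c < a\<close> by simp_all
  ultimately show "0 \<le> \<mu>2"
    by (metis zero_le_mult_iff not_le)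
  have "\<mu>3 * (b * (b - c) * (b - a)) = S * cubic_expect n q 0 c a"
    using interp[of 0 c a] by simp
  also have "\<dots> = S * (1 - e) * (mom2 n q - c * mom1 n q)"
    unfolding c_def cubic_expect_0_d_param[OF assms(1,3)] by (simp add: a_def)
  finally have \<mu>3: "\<mu>3 * (b * (b - c)) = S * (1 - e) * (mom2 n q - c * mom1 n q)"
    by (simp add: b)
  have "0 < b * (b - c)"
    using \<open>0 < c\<close> \<open>c < a\<close> by (simp add: b)
  with \<mu>3 show "e = 1 \<Longrightarrow> \<mu>3 = 0"
    by auto
  have "0 \<le> S * (1 - e) * (mom2 n q - c * mom1 n q)"
    using S assms(6) V by simp
  with \<mu>3 \<open>0 < b * (b - c)\<close> show "0 \<le> \<mu>3"
    by (metis zero_le_mult_iff not_le)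
qed

lemma three_node_certificate:
  fixes \<mu> x :: "nat \<Rightarrow> real"
  assumes "2 \<le> q" "q \<le> n" "0 \<le> j" "j * (j + real q) < (real q - 1) * (real n - 2)"
    and "0 < e" "e \<le> 1"
    and x1: "x 1 = d_param n q j" and x2: "x 2 = d0_param n q j + e - 1"
    and x3: "x 3 = d0_param n q j + e"
    and "x 1 \<in> \<int>" "x 3 \<in> \<int>"
    and vanish: "\<forall>l\<in>{1,2,3}. dual_lambda n q {1,2,3} \<mu> x l = 0"
  shows "0 < dual_lambda n q {1,2,3} \<mu> x 0"
    and "\<forall>k\<in>{1,2,3}. 0 < x k"
    and "\<forall>k\<in>{1,2,3}. 0 \<le> \<mu> k"
    and "\<forall>k\<in>{1,2,3}. \<mu> k \<noteq> 0 \<longrightarrow> x k \<in> \<int> \<and> 0 \<le> x k \<and> x k \<le> real n \<and> x 1 \<le> x k"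
proof -
  note bounds = d_param_bounds[OF assms(1,3,4)]
  have "- (r1 * r2 * r3) + \<mu> 1 * ((x 1 - r1) * (x 1 - r2) * (x 1 - r3))
      + \<mu> 2 * ((x 2 - r1) * (x 2 - r2) * (x 2 - r3)) + \<mu> 3 * ((x 3 - r1) * (x 3 - r2) * (x 3 - r3))
      = dual_lambda n q {1,2,3} \<mu> x 0 * cubic_expect n q r1 r2 r3" for r1 r2 r3
    using cubic_identity_of_dual_lambda[OF assms(1) bounds(1) vanish, of r1 r2 r3]
    by (simp add: algebra_simps)
  note interp = this[unfolded x1 x2 x3]
  show "0 < dual_lambda n q {1,2,3} \<mu> x 0"
    using three_node_lambda_0_pos[OF assms(1-6) interp] .
  note weights = three_node_dual_weights[OF assms(1-6) interp]
  then show "\<forall>k\<in>{1,2,3}. 0 \<le> \<mu> k"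
    by auto
  have "0 < x 1"
    unfolding x1 using bounds(2) .
  have order: "x 1 < x 2" "x 2 \<le> real n" "x 3 = x 2 + 1"
    unfolding x1 x2 x3 using bounds assms(5,6) by simp_all
  with \<open>0 < x 1\<close> show "\<forall>k\<in>{1,2,3}. 0 < x k"
    by auto
  have "x 2 \<in> \<int>"
  proof -
    have "x 2 = x 3 - 1"
      using order(3) by simp
    then show ?thesis
      using \<open>x 3 \<in> \<int>\<close> by simp
  qed
  \<comment> \<open>The node x3 may be n + 1, but only when e = 1, where \<mu>3 vanishes.\<close>
  moreover have "x 3 \<le> real n" if "\<mu> 3 \<noteq> 0"
  proof -
    have "e < 1"
      using weights(4) that assms(6) by force
    then have "x 3 < real n + 1"
      unfolding x3 using bounds(4) by simp
    moreover obtain k where "x 3 = of_int k"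
      using \<open>x 3 \<in> \<int>\<close> by (auto elim: Ints_cases)
    ultimately have "k \<le> int n"
      by linarith
    then show ?thesis
      using \<open>x 3 = of_int k\<close> by linarith
  qed
  ultimately show "\<forall>k\<in>{1,2,3}. \<mu> k \<noteq> 0 \<longrightarrow> x k \<in> \<int> \<and> 0 \<le> x k \<and> x k \<le> real n \<and> x 1 \<le> x k"
    using order \<open>0 < x 1\<close> \<open>x 1 \<in> \<int>\<close> \<open>x 3 \<in> \<int>\<close> by auto
qed

lemma Qcoeff_nodal_cubic:
  fixes \<mu> x :: "nat \<Rightarrow> real"
  assumes "2 \<le> q" "3 \<le> n"
    and vanish: "\<forall>l\<in>{1,2,3}. dual_lambda n q {1,2,3} \<mu> x l = 0"
    and "dual_lambda n q {1,2,3} \<mu> x 0 \<noteq> 0"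
  defines "f \<equiv> \<lambda>t. (t - inner_of_dist n (x 1)) * (t - inner_of_dist n (x 2)) * (t - inner_of_dist n (x 3))"
  shows "Qcoeff n q 3 f 0 = f 1 / dual_lambda n q {1,2,3} \<mu> x 0"
proof -
  define r1 r2 r3 where "r1 = inner_of_dist n (x 1)" and "r2 = inner_of_dist n (x 2)"
    and "r3 = inner_of_dist n (x 3)"
  obtain fs where fs: "\<forall>t. 1 * t^3 + (- (r1 + r2 + r3)) * t^2 + (r1 * r2 + r2 * r3 + r3 * r1) * t
      + (- (r1 * r2 * r3)) = (\<Sum>i\<le>3. fs i * QQ n q i t)"
    using cubic_in_QQ_span[OF assms(1,2)] by blast
  have "\<forall>t. f t = (\<Sum>i\<le>3. fs i * QQ n q i t)"
  proof
    fix t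
    have "f t = 1 * t^3 + (- (r1 + r2 + r3)) * t^2 + (r1 * r2 + r2 * r3 + r3 * r1) * t + (- (r1 * r2 * r3))"
      by (simp add: f_def r1_def r2_def r3_def algebra_simps power2_eq_square power3_eq_cube)
    with fs show "f t = (\<Sum>i\<le>3. fs i * QQ n q i t)"
      by simp
  qed
  moreover have "\<forall>k\<in>{1,2,3}. f (inner_of_dist n (x k)) = 0"
    by (simp add: f_def)
  moreover have "{1..3::nat} = {1,2,3}"
    by auto
  ultimately show ?thesis
    using assms(1,2,4) vanish by (intro Qcoeff_0_eq_dual) auto
qed

lemma three_node_lp_optimal:
  fixes \<mu> x h :: "nat \<Rightarrow> real"
  assumes "2 \<le> q" "q \<le> n" "0 \<le> j" "j * (j + real q) < (real q - 1) * (real n - 2)"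
    and "0 < e" "e \<le> 1"
    and nodes: "x 1 = d_param n q j" "x 2 = d0_param n q j + e - 1" "x 3 = d0_param n q j + e"
    and integral: "x 1 \<in> \<int>" "x 3 \<in> \<int>"
    and vanish: "\<forall>l\<in>{1,2,3}. dual_lambda n q {1,2,3} \<mu> x l = 0"
    and lambda_nonneg: "\<forall>i\<in>{4..n}. 0 \<le> dual_lambda n q {1,2,3} \<mu> x i"
    and h: "m \<le> n" "0 < h 0" "\<forall>i\<le>m. 0 \<le> h i"
      "\<forall>t\<in>Tn n. -1 \<le> t \<and> t \<le> inner_of_dist n (x 1) \<longrightarrow> (\<Sum>i\<le>m. h i * QQ n q i t) \<le> 0"
  defines "f \<equiv> \<lambda>t. (t - inner_of_dist n (x 1)) * (t - inner_of_dist n (x 2)) * (t - inner_of_dist n (x 3))"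
  shows "f 1 / Qcoeff n q 3 f 0 \<le> (\<Sum>i\<le>m. h i * QQ n q i 1) / h 0"
proof -
  define S where "S = dual_lambda n q {1,2,3} \<mu> x 0"
  note cert = three_node_certificate[OF assms(1-6) nodes integral vanish]
  have "3 \<le> n"
    using d_param_bounds assms(1,3,4) by blast
  have "\<forall>i\<in>{1..n}. 0 \<le> dual_lambda n q {1,2,3} \<mu> x i"
  proof
    fix i
    assume "i \<in> {1..n}"
    then have "i \<in> {1,2,3} \<or> i \<in> {4..n}"
      by auto
    then show "0 \<le> dual_lambda n q {1,2,3} \<mu> x i"
      using vanish lambda_nonneg by auto
  qed
  moreover have "\<forall>k\<in>{1,2,3}. \<mu> k \<noteq> 0 \<longrightarrow>
      x k \<in> \<int> \<and> 0 \<le> x k \<and> x k \<le> real n \<and> inner_of_dist n (x k) \<le> inner_of_dist n (x 1)"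
    using cert(4) \<open>3 \<le> n\<close> by (simp add: inner_of_dist_le_iff)
  ultimately have "S \<le> (\<Sum>i\<le>m. h i * QQ n q i 1) / h 0"
    using h cert(3) \<open>3 \<le> n\<close> unfolding S_def by (intro lp_dual_bound[OF assms(1)]) auto
  moreover have "Qcoeff n q 3 f 0 = f 1 / S"
    unfolding f_def S_def using Qcoeff_nodal_cubic[OF assms(1) \<open>3 \<le> n\<close> vanish] cert(1) by simp
  moreover have "0 < f 1"
    unfolding f_def using cert(2) \<open>3 \<le> n\<close> by (simp add: inner_of_dist_def)
  ultimately show ?thesis
    by simp
qed

lemma j_bound_of_sqrt_bound:
  assumes "2 \<le> q" "q \<le> n" "0 \<le> j"
    and "j < (sqrt ((real q)^2 + 4 * (real q - 1) * (real n - 2)) - real q) / 2"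
  shows "j * (j + real q) < (real q - 1) * (real n - 2)"
proof -
  have rad: "0 \<le> (real q)^2 + 4 * (real q - 1) * (real n - 2)"
    using assms(1,2) by (intro add_nonneg_nonneg mult_nonneg_nonneg) auto
  have "(2 * j + real q)^2 < (sqrt ((real q)^2 + 4 * (real q - 1) * (real n - 2)))^2"
    using assms by (intro power_strict_mono) auto
  also have "\<dots> = (real q)^2 + 4 * (real q - 1) * (real n - 2)"
    using rad by simp
  finally show ?thesis
    by (simp add: algebra_simps power2_eq_square)
qed

lemma shifted_root_eq_inner_of_dist:
  assumes "0 < n"
  shows "t + 1 + 2 * w / real n - 2 * j * (real n - 1) / (real n * real q * (j + real q - 1))
    = t - inner_of_dist n (d0_param n q j + w)"
proof -
  have "2 * j * (real n - 1) / (real n * real q * (j + real q - 1)) = 2 * (real n - d0_param n q j) / real n"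
    unfolding d0_param_def by (simp add: divide_divide_eq_left mult.commute mult.left_commute)
  with assms show ?thesis
    by (simp add: inner_of_dist_def field_simps)
qed

theorem theorem4:
  fixes n q :: nat and d :: int and j e \<mu>1 \<mu>2 \<mu>3 :: real
  defines "S1 \<equiv> sqrt ((real q)^2 + 4 * (real q - 1) * (real n - 2))"
  defines "s \<equiv> 1 - 2 * real_of_int d / real n"
  defines "d0 \<equiv> real n - j * (real n - 1) / (real q * (j + real q - 1))"
  defines "f \<equiv> (\<lambda>t::real.
      (t + 1 + 2 * e / real n - 2 * j * (real n - 1) / (real n * real q * (j + real q - 1)))
    * (t + 1 + 2 * (e - 1) / real n - 2 * j * (real n - 1) / (real n * real q * (j + real q - 1)))
    * (t - s))"
  assumes hq: "2 \<le> q" and hn: "q \<le> n"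
    and hj: "real_of_int d = real n - 1 - (real n - 2 + j) / real q"
    and hj0: "0 \<le> j" and hj1: "j < (S1 - real q) / 2"
    and he: "0 < e" "e \<le> 1" "d0 + e \<in> \<int>"
    and hmu: "\<forall>l\<in>{1,2,3}.
        \<mu>1 * kraw n q l (real_of_int d) / rr n q l
      + \<mu>2 * kraw n q l (d0 + e - 1) / rr n q l
      + \<mu>3 * kraw n q l (d0 + e) / rr n q l = -1"
    and hlam: "\<forall>i\<in>{4..n}. 0 \<le> 1
        + \<mu>1 * kraw n q i (real_of_int d) / rr n q i
        + \<mu>2 * kraw n q i (d0 + e - 1) / rr n q i
        + \<mu>3 * kraw n q i (d0 + e) / rr n q i"
  shows "\<forall>(m::nat) (h::nat \<Rightarrow> real).
           m \<le> n \<and> 0 < h 0 \<and> (\<forall>i\<le>m. 0 \<le> h i)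
           \<and> (\<forall>t\<in>Tn n. -1 \<le> t \<and> t \<le> s \<longrightarrow> (\<Sum>i\<le>m. h i * QQ n q i t) \<le> 0)
           \<longrightarrow> f 1 / Qcoeff n q 3 f 0 \<le> (\<Sum>i\<le>m. h i * QQ n q i 1) / h 0"
proof (intro allI impI)
  fix m :: nat and h :: "nat \<Rightarrow> real"
  assume h: "m \<le> n \<and> 0 < h 0 \<and> (\<forall>i\<le>m. 0 \<le> h i)
    \<and> (\<forall>t\<in>Tn n. -1 \<le> t \<and> t \<le> s \<longrightarrow> (\<Sum>i\<le>m. h i * QQ n q i t) \<le> 0)"
  have bound: "j * (j + real q) < (real q - 1) * (real n - 2)"
    using j_bound_of_sqrt_bound hq hn hj0 hj1 by (simp add: S1_def)
  define \<mu> where "\<mu> k = (if k = 1 then \<mu>1 else if k = 2 then \<mu>2 else \<mu>3)" for k :: nat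
  define x where "x k = (if k = 1 then real_of_int d else if k = 2 then d0 + e - 1 else d0 + e)"
    for k :: nat
  have lambda: "dual_lambda n q {1,2,3} \<mu> x i = 1 + \<mu>1 * kraw n q i (real_of_int d) / rr n q i
      + \<mu>2 * kraw n q i (d0 + e - 1) / rr n q i + \<mu>3 * kraw n q i (d0 + e) / rr n q i" for i
    by (simp add: dual_lambda_def \<mu>_def x_def)
  have d0: "d0 = d0_param n q j"
    by (simp add: d0_def d0_param_def)
  have nodes: "x 1 = d_param n q j" "x 2 = d0_param n q j + e - 1" "x 3 = d0_param n q j + e"
    using hj by (simp_all add: x_def d_param_def d0)
  have integral: "x 1 \<in> \<int>" "x 3 \<in> \<int>"
    using he(3) by (simp_all add: x_def)
  have vanish: "\<forall>l\<in>{1,2,3}. dual_lambda n q {1,2,3} \<mu> x l = 0"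
    using hmu unfolding lambda by simp
  have lambda_nonneg: "\<forall>i\<in>{4..n}. 0 \<le> dual_lambda n q {1,2,3} \<mu> x i"
    using hlam unfolding lambda by simp
  have "0 < n"
    using hq hn by simp
  have f_nodal: "f = (\<lambda>t. (t - inner_of_dist n (x 1)) * (t - inner_of_dist n (x 2))
      * (t - inner_of_dist n (x 3)))"
    unfolding f_def shifted_root_eq_inner_of_dist[OF \<open>0 < n\<close>]
    by (simp add: s_def x_def d0 inner_of_dist_def add_diff_eq ac_simps)
  have "s = inner_of_dist n (x 1)"
    by (simp add: s_def x_def inner_of_dist_def)
  with h show "f 1 / Qcoeff n q 3 f 0 \<le> (\<Sum>i\<le>m. h i * QQ n q i 1) / h 0"
    unfolding f_nodal
    by (intro three_node_lp_optimal[OF hq hn hj0 bound he(1,2) nodes integral vanish lambda_nonneg]) auto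
qed

end
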